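(* Let $X$ be a finite-dimensional real vector space, $\phi:X\to\mathbf{R}$ a strictly convex norm, $K\subseteq X$ closed, $0<s<t<\infty$, $1<\lambda<\infty$, and $K_{\lambda,s,t}=\{x:\rho^\phi_K(x)\ge\lambda,\ s\le\delta^\phi_K(x)\le t\}$. Then $\xi^\phi_K$ is single-valued on $K_{\lambda,s,t}$ and $\xi^\phi_K|K_{\lambda,s,t}$ is uniformly continuous.
   Context: A norm $\phi$ is strictly convex if $\phi(a+b)=\phi(a)+\phi(b)$ implies $\phi(b)a=\phi(a)b$. For closed $K$: $\delta^\phi_K(x)=\inf\{\phi(y-x):y\in K\}$; $\xi^\phi_K(x)=K\cap\{w:\phi(x-w)=\delta^\phi_K(x)\}$; $\rho^\phi_K(x)=\sup\bigl(\mathbf{R}\cap\{s':\delta^\phi_K(w+s'(x-w))=s'\delta^\phi_K(x)\}\bigr)$ for any $w\in\xi^\phi_K(x)$ (independent of the choice of $w$). *)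

theory Defs
  imports "HOL-Analysis.Analysis"
begin

definition is_norm :: "('a::real_vector \<Rightarrow> real) \<Rightarrow> bool" where
  "is_norm \<phi> \<longleftrightarrow>
     (\<forall>x. 0 \<le> \<phi> x) \<and> (\<forall>x. \<phi> x = 0 \<longleftrightarrow> x = 0) \<and>
     (\<forall>c x. \<phi> (c *\<^sub>R x) = \<bar>c\<bar> * \<phi> x) \<and>
     (\<forall>x y. \<phi> (x + y) \<le> \<phi> x + \<phi> y)"

definition strictly_convex_norm :: "('a::real_vector \<Rightarrow> real) \<Rightarrow> bool" where
  "strictly_convex_norm \<phi> \<longleftrightarrow> is_norm \<phi> \<and>
     (\<forall>a b. \<phi> (a + b) = \<phi> a + \<phi> b \<longrightarrow> \<phi> b *\<^sub>R a = \<phi> a *\<^sub>R b)"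

definition phi_dist :: "('a::real_vector \<Rightarrow> real) \<Rightarrow> 'a set \<Rightarrow> 'a \<Rightarrow> real" where
  "phi_dist \<phi> K x = Inf {\<phi> (y - x) | y. y \<in> K}"

definition phi_proj :: "('a::real_vector \<Rightarrow> real) \<Rightarrow> 'a set \<Rightarrow> 'a \<Rightarrow> 'a set" where
  "phi_proj \<phi> K x = K \<inter> {w. \<phi> (x - w) = phi_dist \<phi> K x}"

definition phi_reach :: "('a::real_vector \<Rightarrow> real) \<Rightarrow> 'a set \<Rightarrow> 'a \<Rightarrow> ereal" where
  "phi_reach \<phi> K x =
     (let w = (SOME w. w \<in> phi_proj \<phi> K x) in
      Sup (ereal ` {s'::real. phi_dist \<phi> K (w + s' *\<^sub>R (x - w)) = s' * phi_dist \<phi> K x}))"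

end

theory Submission
  imports Defs
begin

(* Suppose the nearest point w of x can be pushed along the ray from w through x, i.e.
   y = w + r (x - w) with r > 1 has distance r * dist(x) to K.  Then phi(y - w') >= r * dist(x)
   for every w' in K; if w' is another nearest point, the right-hand side equals
   phi(y - x) + phi(x - w'), so the triangle y - w' = (y - x) + (x - w') is degenerate and
   strict convexity forces w' = w.  If instead w' is a nearest point of a nearby x', the same
   triangle is only almost degenerate, with defect at most 2 phi(x - x').  By compactness,
   strict convexity is uniform on bounded sets, so x - w' is almost parallel to x - w; both have
   length close to dist(x) >= s, hence w' is close to w. *)

lemma is_norm_nonneg: "is_norm \<phi> \<Longrightarrow> 0 \<le> \<phi> x"
  by (simp add: is_norm_def)

lemma is_norm_eq_0: "is_norm \<phi> \<Longrightarrow> \<phi> x = 0 \<longleftrightarrow> x = 0"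
  by (simp add: is_norm_def)

lemma is_norm_scaleR: "is_norm \<phi> \<Longrightarrow> \<phi> (c *\<^sub>R x) = \<bar>c\<bar> * \<phi> x"
  by (simp add: is_norm_def)

lemma is_norm_triangle: "is_norm \<phi> \<Longrightarrow> \<phi> (x + y) \<le> \<phi> x + \<phi> y"
  by (simp add: is_norm_def)

lemma is_norm_minus: "is_norm \<phi> \<Longrightarrow> \<phi> (- x) = \<phi> x"
  using is_norm_scaleR[of \<phi> "-1" x] by simp

lemma is_norm_minus_commute: "is_norm \<phi> \<Longrightarrow> \<phi> (x - y) = \<phi> (y - x)"
  using is_norm_minus[of \<phi> "y - x"] by simp

lemma is_norm_triangle_sub: "is_norm \<phi> \<Longrightarrow> \<phi> (x - y) \<le> \<phi> (x - z) + \<phi> (z - y)"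
  using is_norm_triangle[of \<phi> "x - z" "z - y"] by simp

lemma is_norm_abs_diff_le: "is_norm \<phi> \<Longrightarrow> \<bar>\<phi> x - \<phi> y\<bar> \<le> \<phi> (x - y)"
  using is_norm_triangle[of \<phi> "x - y" y] is_norm_triangle[of \<phi> "y - x" x]
    is_norm_minus_commute[of \<phi> x y] by auto

lemma is_norm_sum_le:
  assumes "is_norm \<phi>" and "finite A"
  shows "\<phi> (sum f A) \<le> (\<Sum>a\<in>A. \<phi> (f a))"
  using assms(2)
proof (induction A rule: finite_induct)
  case empty
  then show ?case using is_norm_eq_0[OF assms(1), of 0] by simp
next
  case (insert x F)
  then show ?case using is_norm_triangle[OF assms(1), of "f x" "sum f F"] by simp
qed

lemma is_norm_le_norm:
  fixes \<phi> :: "'a::euclidean_space \<Rightarrow> real"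
  assumes "is_norm \<phi>"
  obtains C where "C > 0" and "\<And>x. \<phi> x \<le> C * norm x"
proof
  define C where "C = (\<Sum>b\<in>(Basis::'a set). \<phi> b) + 1"
  have sum_nonneg: "0 \<le> (\<Sum>b\<in>(Basis::'a set). \<phi> b)"
    by (rule sum_nonneg) (simp add: is_norm_nonneg assms)
  then show "C > 0" by (simp add: C_def)
  fix x :: 'a
  have "\<phi> x = \<phi> (\<Sum>b\<in>Basis. inner x b *\<^sub>R b)" by (simp add: euclidean_representation)
  also have "\<dots> \<le> (\<Sum>b\<in>Basis. \<phi> (inner x b *\<^sub>R b))" by (rule is_norm_sum_le[OF assms]) simp
  also have "\<dots> = (\<Sum>b\<in>Basis. \<bar>inner x b\<bar> * \<phi> b)" by (simp add: is_norm_scaleR[OF assms])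
  also have "\<dots> \<le> (\<Sum>b\<in>Basis. norm x * \<phi> b)"
    by (rule sum_mono) (simp add: Basis_le_norm mult_right_mono is_norm_nonneg[OF assms])
  also have "\<dots> \<le> C * norm x"
    using sum_nonneg by (simp add: C_def sum_distrib_left[symmetric] algebra_simps)
  finally show "\<phi> x \<le> C * norm x" .
qed

lemma continuous_on_is_norm:
  fixes \<phi> :: "'a::euclidean_space \<Rightarrow> real"
  assumes "is_norm \<phi>"
  shows "continuous_on UNIV \<phi>"
proof -
  obtain C where C: "C > 0" "\<And>x. \<phi> x \<le> C * norm x" using is_norm_le_norm[OF assms] by blast
  have "lipschitz_on C UNIV \<phi>"
    unfolding lipschitz_on_def
  proof (intro conjI ballI)
    fix x y :: 'a
    have "dist (\<phi> x) (\<phi> y) \<le> \<phi> (x - y)"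
      using is_norm_abs_diff_le[OF assms, of x y] by (simp add: dist_real_def)
    also have "\<dots> \<le> C * dist x y" using C(2)[of "x - y"] by (simp add: dist_norm)
    finally show "dist (\<phi> x) (\<phi> y) \<le> C * dist x y" .
  qed (use C in auto)
  then show ?thesis by (rule lipschitz_on_continuous_on)
qed

lemma continuous_on_is_norm_compose:
  fixes \<phi> :: "'a::euclidean_space \<Rightarrow> real"
  assumes "is_norm \<phi>" and "continuous_on S f"
  shows "continuous_on S (\<lambda>x. \<phi> (f x))"
  using continuous_on_compose2[OF continuous_on_is_norm[OF assms(1)] assms(2)] by simp

lemma is_norm_ge_norm:
  fixes \<phi> :: "'a::euclidean_space \<Rightarrow> real"
  assumes "is_norm \<phi>"
  obtains c where "c > 0" and "\<And>x. c * norm x \<le> \<phi> x"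
proof -
  obtain p where p: "p \<in> sphere (0::'a) 1" "\<And>y. y \<in> sphere 0 1 \<Longrightarrow> \<phi> p \<le> \<phi> y"
    using continuous_attains_inf[OF compact_sphere[of 0 1] _
        continuous_on_subset[OF continuous_on_is_norm[OF assms]]]
    by auto
  have "p \<noteq> 0" using p(1) by auto
  then have "\<phi> p > 0" using is_norm_eq_0[OF assms, of p] is_norm_nonneg[OF assms, of p] by linarith
  moreover have "\<phi> p * norm x \<le> \<phi> x" for x
  proof (cases "x = 0")
    case True
    then show ?thesis by (simp add: is_norm_nonneg[OF assms])
  next
    case False
    have "\<phi> p \<le> \<phi> (inverse (norm x) *\<^sub>R x)" using p(2) False by simp
    also have "\<dots> = \<phi> x / norm x"
      using is_norm_scaleR[OF assms] by (simp add: divide_inverse mult.commute)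
    finally show ?thesis using False by (simp add: field_simps)
  qed
  ultimately show thesis using that by blast
qed

lemma uniformly_continuous_on_is_normI:
  fixes \<phi> :: "'a::euclidean_space \<Rightarrow> real" and \<psi> :: "'b::euclidean_space \<Rightarrow> real"
  assumes "is_norm \<phi>" and "is_norm \<psi>"
    and "\<And>e. e > 0 \<Longrightarrow> \<exists>d>0. \<forall>x\<in>S. \<forall>y\<in>S. \<phi> (x - y) < d \<longrightarrow> \<psi> (f x - f y) < e"
  shows "uniformly_continuous_on S f"
  unfolding uniformly_continuous_on_def
proof (intro allI impI)
  fix e :: real
  assume "e > 0"
  obtain c where c: "c > 0" "\<And>z. c * norm z \<le> \<psi> z" using is_norm_ge_norm[OF assms(2)] by blast
  obtain C where C: "C > 0" "\<And>z. \<phi> z \<le> C * norm z" using is_norm_le_norm[OF assms(1)] by blast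
  obtain d where d: "d > 0" "\<And>x y. x \<in> S \<Longrightarrow> y \<in> S \<Longrightarrow> \<phi> (x - y) < d \<Longrightarrow> \<psi> (f x - f y) < c * e"
    using assms(3)[of "c * e"] c(1) \<open>e > 0\<close> by auto
  show "\<exists>d>0. \<forall>x\<in>S. \<forall>y\<in>S. dist y x < d \<longrightarrow> dist (f y) (f x) < e"
  proof (intro exI[of _ "d / C"] conjI ballI impI)
    show "d / C > 0" using d(1) C(1) by simp
    fix x y
    assume "x \<in> S" "y \<in> S" "dist y x < d / C"
    then have "\<phi> (y - x) < d"
      using C by (simp add: dist_norm field_simps) (meson C(2) order_le_less_trans)
    then have "c * norm (f y - f x) < c * e"
      using d(2) \<open>x \<in> S\<close> \<open>y \<in> S\<close> c(2) order_le_less_trans by blast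
    then show "dist (f y) (f x) < e" using c(1) by (simp add: dist_norm)
  qed
qed

lemma phi_dist_le: "is_norm \<phi> \<Longrightarrow> y \<in> K \<Longrightarrow> phi_dist \<phi> K x \<le> \<phi> (y - x)"
  unfolding phi_dist_def by (rule cInf_lower, blast, rule bdd_belowI[of _ 0]) (auto simp: is_norm_nonneg)

lemma phi_dist_attained:
  fixes \<phi> :: "'a::euclidean_space \<Rightarrow> real"
  assumes N: "is_norm \<phi>" and K: "closed K" "K \<noteq> {}"
  obtains w where "w \<in> K" and "phi_dist \<phi> K x = \<phi> (x - w)"
proof -
  obtain c where c: "c > 0" "\<And>x. c * norm x \<le> \<phi> x" using is_norm_ge_norm[OF N] by blast
  obtain y0 where y0: "y0 \<in> K" using K by blast
  define R where "R = \<phi> (y0 - x) / c"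
  have y0_R: "y0 \<in> cball x R"
    using c(2)[of "y0 - x"] c(1) by (simp add: R_def dist_norm field_simps norm_minus_commute)
  have "compact (K \<inter> cball x R)" using K(1) by (simp add: closed_Int_compact)
  moreover have "K \<inter> cball x R \<noteq> {}" using y0 y0_R by blast
  moreover have "continuous_on (K \<inter> cball x R) (\<lambda>y. \<phi> (y - x))"
    by (rule continuous_on_is_norm_compose[OF N]) (intro continuous_intros)
  ultimately obtain w where w: "w \<in> K \<inter> cball x R" "\<forall>y\<in>K \<inter> cball x R. \<phi> (w - x) \<le> \<phi> (y - x)"
    using continuous_attains_inf by blast
  \<comment> \<open>Points outside the ball are farther from x than y0, so w minimises over all of K.\<close>
  have "\<phi> (w - x) \<le> \<phi> (y - x)" if "y \<in> K" for y
  proof (cases "y \<in> cball x R")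
    case True
    then show ?thesis using w that by blast
  next
    case False
    then have "\<phi> (y0 - x) < c * norm (y - x)"
      using c(1) by (simp add: R_def dist_norm norm_minus_commute field_simps)
    also have "\<dots> \<le> \<phi> (y - x)" by (rule c(2))
    moreover have "\<phi> (w - x) \<le> \<phi> (y0 - x)" using w(2) y0 y0_R by blast
    ultimately show ?thesis by linarith
  qed
  then have "phi_dist \<phi> K x = \<phi> (w - x)"
    unfolding phi_dist_def using w(1) by (intro cInf_eq_minimum) auto
  then show thesis using that[of w] w(1) is_norm_minus_commute[OF N, of w x] by auto
qed

lemma phi_proj_nonempty:
  fixes \<phi> :: "'a::euclidean_space \<Rightarrow> real"
  assumes "is_norm \<phi>" and "closed K" and "K \<noteq> {}"
  shows "phi_proj \<phi> K x \<noteq> {}"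
proof -
  obtain w where "w \<in> K" and "phi_dist \<phi> K x = \<phi> (x - w)" using phi_dist_attained[OF assms] .
  then have "w \<in> phi_proj \<phi> K x" by (simp add: phi_proj_def)
  then show ?thesis by blast
qed

lemma phi_dist_triangle:
  fixes \<phi> :: "'a::euclidean_space \<Rightarrow> real"
  assumes N: "is_norm \<phi>" and "closed K" and "K \<noteq> {}"
  shows "phi_dist \<phi> K z \<le> phi_dist \<phi> K y + \<phi> (z - y)"
proof -
  obtain w where w: "w \<in> K" "phi_dist \<phi> K y = \<phi> (y - w)"
    using phi_dist_attained[OF assms, of y] by blast
  have "phi_dist \<phi> K z \<le> \<phi> (w - z)" by (rule phi_dist_le[OF N w(1)])
  also have "\<dots> \<le> \<phi> (w - y) + \<phi> (y - z)" by (rule is_norm_triangle_sub[OF N])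
  finally show ?thesis
    using w(2) is_norm_minus_commute[OF N, of y w] is_norm_minus_commute[OF N, of y z] by linarith
qed

lemma strictly_convex_norm_uniform:
  fixes \<phi> :: "'a::euclidean_space \<Rightarrow> real"
  assumes SC: "strictly_convex_norm \<phi>" and "\<epsilon> > 0"
  obtains \<gamma> where "\<gamma> > 0"
    and "\<And>a b. \<phi> a \<le> M \<Longrightarrow> \<phi> b \<le> M \<Longrightarrow> \<phi> a + \<phi> b - \<phi> (a + b) < \<gamma>
           \<Longrightarrow> \<phi> (\<phi> b *\<^sub>R a - \<phi> a *\<^sub>R b) < \<epsilon>"
proof -
  have N: "is_norm \<phi>" using SC by (simp add: strictly_convex_norm_def)
  obtain c where c: "c > 0" "\<And>x. c * norm x \<le> \<phi> x" using is_norm_ge_norm[OF N] by blast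
  define defect where "defect p = \<phi> (fst p) + \<phi> (snd p) - \<phi> (fst p + snd p)" for p :: "'a \<times> 'a"
  define skew where "skew p = \<phi> (\<phi> (snd p) *\<^sub>R fst p - \<phi> (fst p) *\<^sub>R snd p)" for p :: "'a \<times> 'a"
  define D where "D = {p. \<phi> (fst p) \<le> M \<and> \<phi> (snd p) \<le> M \<and> \<epsilon> \<le> skew p}"
  have cont_fst: "continuous_on UNIV (\<lambda>p::'a \<times> 'a. \<phi> (fst p))"
    by (rule continuous_on_is_norm_compose[OF N]) (intro continuous_intros)
  have cont_snd: "continuous_on UNIV (\<lambda>p::'a \<times> 'a. \<phi> (snd p))"
    by (rule continuous_on_is_norm_compose[OF N]) (intro continuous_intros)
  have cont_skew: "continuous_on UNIV skew"
    unfolding skew_def by (rule continuous_on_is_norm_compose[OF N]) (intro continuous_intros cont_fst cont_snd)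
  have cont_defect: "continuous_on D defect"
    unfolding defect_def
    by (intro continuous_intros continuous_on_subset[OF cont_fst] continuous_on_subset[OF cont_snd]
        continuous_on_is_norm_compose[OF N]) auto
  have "closed D"
    unfolding D_def by (intro closed_Collect_conj closed_Collect_le cont_fst cont_skew cont_snd continuous_intros)
  moreover have "bounded D"
    unfolding bounded_iff
  proof (intro exI ballI)
    fix p
    assume "p \<in> D"
    then have "c * norm (fst p) \<le> M" "c * norm (snd p) \<le> M"
      using c(2) by (auto simp: D_def intro: order_trans)
    then have "norm (fst p) \<le> M / c" "norm (snd p) \<le> M / c" using c(1) by (simp_all add: field_simps)
    then show "norm p \<le> 2 * (M / c)" using norm_Pair_le[of "fst p" "snd p"] by simp
  qed
  ultimately have "compact D" by (simp add: compact_eq_bounded_closed)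
  have defect_pos: "0 < defect p" if "p \<in> D" for p
  proof -
    have "0 \<le> defect p" using is_norm_triangle[OF N] by (simp add: defect_def)
    moreover have "defect p \<noteq> 0"
    proof
      assume "defect p = 0"
      then have "skew p = 0"
        using SC is_norm_eq_0[OF N, of 0] by (simp add: strictly_convex_norm_def defect_def skew_def)
      then show False using that \<open>\<epsilon> > 0\<close> by (simp add: D_def)
    qed
    ultimately show ?thesis by linarith
  qed
  obtain \<gamma> where \<gamma>: "\<gamma> > 0" "\<And>p. p \<in> D \<Longrightarrow> \<gamma> \<le> defect p"
  proof (cases "D = {}")
    case True
    then show thesis using that[of 1] by simp
  next
    case False
    then obtain p0 where "p0 \<in> D" "\<And>p. p \<in> D \<Longrightarrow> defect p0 \<le> defect p"
      using continuous_attains_inf[OF \<open>compact D\<close> _ cont_defect] by blast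
    then show thesis using that[of "defect p0"] defect_pos by blast
  qed
  show thesis
  proof (rule that[OF \<gamma>(1)])
    fix a b
    assume "\<phi> a \<le> M" "\<phi> b \<le> M" "\<phi> a + \<phi> b - \<phi> (a + b) < \<gamma>"
    then have "(a, b) \<notin> D" using \<gamma>(2)[of "(a, b)"] by (auto simp: defect_def)
    then show "\<phi> (\<phi> b *\<^sub>R a - \<phi> a *\<^sub>R b) < \<epsilon>"
      using \<open>\<phi> a \<le> M\<close> \<open>\<phi> b \<le> M\<close> by (auto simp: D_def skew_def)
  qed
qed

lemma phi_dist_on_ray_segment:
  fixes \<phi> :: "'a::euclidean_space \<Rightarrow> real"
  assumes N: "is_norm \<phi>" and K: "closed K" "K \<noteq> {}"
    and w: "w \<in> phi_proj \<phi> K x" and r: "0 \<le> r" "r \<le> e"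
    and e: "phi_dist \<phi> K (w + e *\<^sub>R (x - w)) = e * phi_dist \<phi> K x"
  shows "phi_dist \<phi> K (w + r *\<^sub>R (x - w)) = r * phi_dist \<phi> K x"
proof -
  have wK: "w \<in> K" and wd: "\<phi> (x - w) = phi_dist \<phi> K x" using w by (auto simp: phi_proj_def)
  have "phi_dist \<phi> K (w + r *\<^sub>R (x - w)) \<le> \<phi> (w - (w + r *\<^sub>R (x - w)))"
    by (rule phi_dist_le[OF N wK])
  also have "\<dots> = r * phi_dist \<phi> K x"
    using is_norm_minus[OF N, of "r *\<^sub>R (x - w)"] is_norm_scaleR[OF N, of r "x - w"] wd r by simp
  finally have le: "phi_dist \<phi> K (w + r *\<^sub>R (x - w)) \<le> r * phi_dist \<phi> K x" .
  have "e * phi_dist \<phi> K x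
      \<le> phi_dist \<phi> K (w + r *\<^sub>R (x - w)) + \<phi> ((w + e *\<^sub>R (x - w)) - (w + r *\<^sub>R (x - w)))"
    using phi_dist_triangle[OF N K, of "w + e *\<^sub>R (x - w)" "w + r *\<^sub>R (x - w)"] e by simp
  also have "(w + e *\<^sub>R (x - w)) - (w + r *\<^sub>R (x - w)) = (e - r) *\<^sub>R (x - w)"
    by (simp add: algebra_simps)
  also have "\<phi> ((e - r) *\<^sub>R (x - w)) = (e - r) * phi_dist \<phi> K x"
    using is_norm_scaleR[OF N, of "e - r" "x - w"] wd r by simp
  finally have "r * phi_dist \<phi> K x \<le> phi_dist \<phi> K (w + r *\<^sub>R (x - w))"
    by (simp add: algebra_simps)
  with le show ?thesis by linarith
qed

lemma phi_proj_unique_of_ray: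
  fixes \<phi> :: "'a::euclidean_space \<Rightarrow> real"
  assumes SC: "strictly_convex_norm \<phi>"
    and w: "w \<in> phi_proj \<phi> K x" and w': "w' \<in> phi_proj \<phi> K x"
    and d: "phi_dist \<phi> K x > 0" and r: "r > 1"
    and ray: "phi_dist \<phi> K (w + r *\<^sub>R (x - w)) = r * phi_dist \<phi> K x"
  shows "w' = w"
proof -
  have N: "is_norm \<phi>" using SC by (simp add: strictly_convex_norm_def)
  define d0 where "d0 = phi_dist \<phi> K x"
  define y where "y = w + r *\<^sub>R (x - w)"
  have wd: "\<phi> (x - w) = d0" using w by (auto simp: phi_proj_def d0_def)
  have w'K: "w' \<in> K" and w'd: "\<phi> (x - w') = d0" using w' by (auto simp: phi_proj_def d0_def)
  have yx: "y - x = (r - 1) *\<^sub>R (x - w)" by (simp add: y_def algebra_simps)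
  have \<phi>yx: "\<phi> (y - x) = (r - 1) * d0" using yx is_norm_scaleR[OF N, of "r - 1" "x - w"] wd r by simp
  have "r * d0 \<le> \<phi> (w' - y)" using phi_dist_le[OF N w'K, of y] ray by (simp add: y_def d0_def)
  also have "\<phi> (w' - y) = \<phi> ((y - x) + (x - w'))" using is_norm_minus_commute[OF N, of w' y] by simp
  finally have "\<phi> (y - x) + \<phi> (x - w') \<le> \<phi> ((y - x) + (x - w'))"
    using \<phi>yx w'd by (simp add: algebra_simps)
  with is_norm_triangle[OF N, of "y - x" "x - w'"]
  have "\<phi> ((y - x) + (x - w')) = \<phi> (y - x) + \<phi> (x - w')" by linarith
  then have "\<phi> (x - w') *\<^sub>R (y - x) = \<phi> (y - x) *\<^sub>R (x - w')"
    using SC by (simp add: strictly_convex_norm_def)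
  then have "((r - 1) * d0) *\<^sub>R (x - w) = ((r - 1) * d0) *\<^sub>R (x - w')"
    using yx \<phi>yx w'd by (simp add: mult.commute)
  moreover have "(r - 1) * d0 \<noteq> 0" using r d by (simp add: d0_def)
  ultimately show ?thesis by simp
qed

lemma phi_proj_singleton_of_reach:
  fixes \<phi> :: "'a::euclidean_space \<Rightarrow> real"
  assumes SC: "strictly_convex_norm \<phi>" and K: "closed K" "K \<noteq> {}"
    and r: "1 < r" "ereal r < phi_reach \<phi> K x" and d: "phi_dist \<phi> K x > 0"
  obtains w where "phi_proj \<phi> K x = {w}"
    and "phi_dist \<phi> K (w + r *\<^sub>R (x - w)) = r * phi_dist \<phi> K x"
proof -
  have N: "is_norm \<phi>" using SC by (simp add: strictly_convex_norm_def)
  define w where "w = (SOME w. w \<in> phi_proj \<phi> K x)"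
  have w: "w \<in> phi_proj \<phi> K x" unfolding w_def using phi_proj_nonempty[OF N K] by (simp add: some_in_eq)
  define R where "R = {s'::real. phi_dist \<phi> K (w + s' *\<^sub>R (x - w)) = s' * phi_dist \<phi> K x}"
  have "phi_reach \<phi> K x = Sup (ereal ` R)" by (simp add: phi_reach_def Let_def w_def R_def)
  with r(2) obtain e where "e \<in> R" "r < e" by (auto simp: less_Sup_iff)
  then have ray: "phi_dist \<phi> K (w + r *\<^sub>R (x - w)) = r * phi_dist \<phi> K x"
    using phi_dist_on_ray_segment[OF N K w, of r e] r(1) by (simp add: R_def)
  have "phi_proj \<phi> K x = {w}" using phi_proj_unique_of_ray[OF SC w _ d r(1) ray] w by blast
  then show thesis using ray by (rule that)
qed

lemma is_norm_diff_le_skew: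
  assumes N: "is_norm \<phi>"
  shows "\<phi> u * \<phi> (a - u) \<le> \<phi> (\<phi> u *\<^sub>R a - \<phi> a *\<^sub>R u) + \<bar>\<phi> a - \<phi> u\<bar> * \<phi> u"
proof -
  have "\<phi> u *\<^sub>R (a - u) = (\<phi> u *\<^sub>R a - \<phi> a *\<^sub>R u) + (\<phi> a - \<phi> u) *\<^sub>R u"
    by (simp add: algebra_simps)
  then have "\<phi> (\<phi> u *\<^sub>R (a - u)) \<le> \<phi> (\<phi> u *\<^sub>R a - \<phi> a *\<^sub>R u) + \<phi> ((\<phi> a - \<phi> u) *\<^sub>R u)"
    using is_norm_triangle[OF N] by metis
  then show ?thesis using is_norm_nonneg[OF N, of u] by (simp add: is_norm_scaleR[OF N])
qed

lemma phi_proj_estimate: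
  fixes \<phi> :: "'a::euclidean_space \<Rightarrow> real"
  assumes N: "is_norm \<phi>" and K: "closed K" "K \<noteq> {}" and r: "1 < r"
    and w1: "w1 \<in> phi_proj \<phi> K x1"
    and ray: "phi_dist \<phi> K (w1 + r *\<^sub>R (x1 - w1)) = r * phi_dist \<phi> K x1"
    and w2: "w2 \<in> phi_proj \<phi> K x2"
  defines "a \<equiv> x1 - w2" and "b \<equiv> (r - 1) *\<^sub>R (x1 - w1)"
    and "d \<equiv> phi_dist \<phi> K x1" and "h \<equiv> \<phi> (x1 - x2)"
  shows "\<phi> a \<le> d + 2 * h" and "\<phi> b = (r - 1) * d"
    and "\<phi> a + \<phi> b - \<phi> (a + b) \<le> 2 * h"
    and "(r - 1) * d * \<phi> (w1 - w2) \<le> \<phi> (\<phi> b *\<^sub>R a - \<phi> a *\<^sub>R b) + 2 * (r - 1) * d * h"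
proof -
  define u where "u = x1 - w1"
  have \<phi>u: "\<phi> u = d" using w1 by (simp add: phi_proj_def u_def d_def)
  have w2K: "w2 \<in> K" and \<phi>w2: "\<phi> (x2 - w2) = phi_dist \<phi> K x2" using w2 by (auto simp: phi_proj_def)
  have d_le_a: "d \<le> \<phi> a"
    using phi_dist_le[OF N w2K, of x1] is_norm_minus_commute[OF N, of w2 x1] by (simp add: d_def a_def)
  have "\<phi> a \<le> phi_dist \<phi> K x2 + h"
    using is_norm_triangle[OF N, of "x2 - w2" "x1 - x2"] \<phi>w2 by (simp add: a_def h_def)
  moreover have "phi_dist \<phi> K x2 \<le> d + h"
    using phi_dist_triangle[OF N K, of x2 x1] is_norm_minus_commute[OF N, of x2 x1] by (simp add: d_def h_def)
  ultimately show a_le: "\<phi> a \<le> d + 2 * h" by linarith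
  show \<phi>b: "\<phi> b = (r - 1) * d" using is_norm_scaleR[OF N] \<phi>u r by (simp add: b_def u_def)
  have "a + b = (w1 + r *\<^sub>R (x1 - w1)) - w2" by (simp add: a_def b_def algebra_simps)
  then have "r * d \<le> \<phi> (a + b)"
    using phi_dist_le[OF N w2K, of "w1 + r *\<^sub>R (x1 - w1)"] ray is_norm_minus_commute[OF N, of w2]
    by (simp add: d_def)
  then show "\<phi> a + \<phi> b - \<phi> (a + b) \<le> 2 * h" using a_le \<phi>b by (simp add: algebra_simps)
  have "\<phi> b *\<^sub>R a - \<phi> a *\<^sub>R b = ((r - 1) * \<phi> u) *\<^sub>R a - \<phi> a *\<^sub>R ((r - 1) *\<^sub>R u)"
    unfolding \<phi>b \<phi>u by (simp add: b_def u_def)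
  also have "\<dots> = (r - 1) *\<^sub>R (\<phi> u *\<^sub>R a - \<phi> a *\<^sub>R u)" by (simp add: algebra_simps)
  finally have skew: "\<phi> (\<phi> b *\<^sub>R a - \<phi> a *\<^sub>R b) = (r - 1) * \<phi> (\<phi> u *\<^sub>R a - \<phi> a *\<^sub>R u)"
    using is_norm_scaleR[OF N] r by simp
  have "d * \<phi> (w1 - w2) \<le> \<phi> (\<phi> u *\<^sub>R a - \<phi> a *\<^sub>R u) + \<bar>\<phi> a - d\<bar> * d"
    using is_norm_diff_le_skew[OF N, of u a] \<phi>u by (simp add: a_def u_def)
  also have "\<dots> \<le> \<phi> (\<phi> u *\<^sub>R a - \<phi> a *\<^sub>R u) + 2 * h * d"
    using d_le_a a_le is_norm_nonneg[OF N, of u] \<phi>u by (intro add_left_mono mult_right_mono) auto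
  finally have "(r - 1) * (d * \<phi> (w1 - w2)) \<le> (r - 1) * (\<phi> (\<phi> u *\<^sub>R a - \<phi> a *\<^sub>R u) + 2 * h * d)"
    using r by (intro mult_left_mono) auto
  then show "(r - 1) * d * \<phi> (w1 - w2) \<le> \<phi> (\<phi> b *\<^sub>R a - \<phi> a *\<^sub>R b) + 2 * (r - 1) * d * h"
    using skew by (simp add: algebra_simps)
qed

lemma uniformly_continuous_on_phi_proj:
  fixes \<phi> :: "'a::euclidean_space \<Rightarrow> real"
  assumes SC: "strictly_convex_norm \<phi>" and K: "closed K" "K \<noteq> {}"
    and r: "1 < r" and s: "0 < s"
    and proj: "\<And>x. x \<in> S \<Longrightarrow>
      \<exists>w. phi_proj \<phi> K x = {w} \<and> phi_dist \<phi> K (w + r *\<^sub>R (x - w)) = r * phi_dist \<phi> K x"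
    and dist: "\<And>x. x \<in> S \<Longrightarrow> s \<le> phi_dist \<phi> K x \<and> phi_dist \<phi> K x \<le> t"
  shows "uniformly_continuous_on S (\<lambda>x. the_elem (phi_proj \<phi> K x))"
proof -
  have N: "is_norm \<phi>" using SC by (simp add: strictly_convex_norm_def)
  show ?thesis
  proof (rule uniformly_continuous_on_is_normI[OF N N])
    fix e :: real
    assume "e > 0"
    then have "(r - 1) * s * e / 2 > 0" using r s by simp
    then obtain \<gamma> where \<gamma>: "\<gamma> > 0"
      "\<And>a b. \<phi> a \<le> r * t + 2 \<Longrightarrow> \<phi> b \<le> r * t + 2 \<Longrightarrow> \<phi> a + \<phi> b - \<phi> (a + b) < \<gamma>
         \<Longrightarrow> \<phi> (\<phi> b *\<^sub>R a - \<phi> a *\<^sub>R b) < (r - 1) * s * e / 2"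
      using strictly_convex_norm_uniform[OF SC] by metis
    define \<delta> where "\<delta> = min 1 (min (\<gamma> / 2) (e / 4))"
    show "\<exists>\<delta>>0. \<forall>x\<in>S. \<forall>y\<in>S. \<phi> (x - y) < \<delta> \<longrightarrow>
            \<phi> (the_elem (phi_proj \<phi> K x) - the_elem (phi_proj \<phi> K y)) < e"
    proof (intro exI[of _ \<delta>] conjI ballI impI)
      show "\<delta> > 0" using \<gamma>(1) \<open>e > 0\<close> by (simp add: \<delta>_def)
      fix x1 x2
      assume "x1 \<in> S" "x2 \<in> S" and h: "\<phi> (x1 - x2) < \<delta>"
      obtain w1 where w1: "phi_proj \<phi> K x1 = {w1}"
        and ray: "phi_dist \<phi> K (w1 + r *\<^sub>R (x1 - w1)) = r * phi_dist \<phi> K x1"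
        using proj[OF \<open>x1 \<in> S\<close>] by blast
      obtain w2 where w2: "phi_proj \<phi> K x2 = {w2}" using proj[OF \<open>x2 \<in> S\<close>] by blast
      have "w1 \<in> phi_proj \<phi> K x1" "w2 \<in> phi_proj \<phi> K x2" using w1 w2 by auto
      note estimate = phi_proj_estimate[OF N K r this(1) ray this(2)]
      let ?a = "x1 - w2" and ?b = "(r - 1) *\<^sub>R (x1 - w1)"
      let ?d = "phi_dist \<phi> K x1" and ?h = "\<phi> (x1 - x2)"
      have d: "s \<le> ?d" "?d \<le> t" using dist[OF \<open>x1 \<in> S\<close>] by auto
      have h: "?h \<le> 1" "2 * ?h < \<gamma>" "?h < e / 4" using h by (auto simp: \<delta>_def)
      have "t \<le> r * t" using d s r by simp
      then have "\<phi> ?a \<le> r * t + 2" using estimate(1) d h by linarith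
      moreover have "(r - 1) * ?d \<le> (r - 1) * t" using d r by (intro mult_left_mono) auto
      then have "\<phi> ?b \<le> r * t + 2" using estimate(2) d s r by (simp add: algebra_simps)
      moreover have "\<phi> ?a + \<phi> ?b - \<phi> (?a + ?b) < \<gamma>" using estimate(3) h by linarith
      ultimately have "\<phi> (\<phi> ?b *\<^sub>R ?a - \<phi> ?a *\<^sub>R ?b) < (r - 1) * s * e / 2" by (rule \<gamma>(2))
      also have "\<dots> \<le> (r - 1) * ?d * (e / 2)"
        using d r \<open>e > 0\<close> by (simp add: mult_right_mono)
      finally have "(r - 1) * ?d * \<phi> (w1 - w2) < (r - 1) * ?d * (e / 2 + 2 * ?h)"
        using estimate(4) by (simp add: algebra_simps)
      then have "\<phi> (w1 - w2) < e / 2 + 2 * ?h" using d s r by simp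
      then show "\<phi> (the_elem (phi_proj \<phi> K x1) - the_elem (phi_proj \<phi> K x2)) < e"
        using w1 w2 h by simp
    qed
  qed
qed

theorem corollary3p3:
  fixes \<phi> :: "'a::euclidean_space \<Rightarrow> real"
    and K :: "'a set" and s t lam :: real
  assumes "strictly_convex_norm \<phi>"
    and "closed K" and "K \<noteq> {}"
    and "0 < s" and "s < t"
    and "1 < lam"
  shows "(\<forall>x \<in> {x. phi_reach \<phi> K x \<ge> ereal lam \<and> s \<le> phi_dist \<phi> K x \<and> phi_dist \<phi> K x \<le> t}.
            \<exists>w. phi_proj \<phi> K x = {w})
       \<and> uniformly_continuous_on
           {x. phi_reach \<phi> K x \<ge> ereal lam \<and> s \<le> phi_dist \<phi> K x \<and> phi_dist \<phi> K x \<le> t}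
           (\<lambda>x. the_elem (phi_proj \<phi> K x))"
proof -
  define S where "S = {x. phi_reach \<phi> K x \<ge> ereal lam \<and> s \<le> phi_dist \<phi> K x \<and> phi_dist \<phi> K x \<le> t}"
  define r where "r = (1 + lam) / 2"
  have r: "1 < r" "r < lam" using assms(6) by (auto simp: r_def)
  have proj: "\<exists>w. phi_proj \<phi> K x = {w} \<and> phi_dist \<phi> K (w + r *\<^sub>R (x - w)) = r * phi_dist \<phi> K x"
    if "x \<in> S" for x
  proof -
    have "ereal r < ereal lam" using r(2) by simp
    also have "ereal lam \<le> phi_reach \<phi> K x" using that by (simp add: S_def)
    finally have "ereal r < phi_reach \<phi> K x" .
    moreover have "phi_dist \<phi> K x > 0" using that assms(4) by (auto simp: S_def)
    ultimately show ?thesis using phi_proj_singleton_of_reach[OF assms(1-3) r(1)] by metis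
  qed
  moreover have "uniformly_continuous_on S (\<lambda>x. the_elem (phi_proj \<phi> K x))"
    by (rule uniformly_continuous_on_phi_proj[OF assms(1-3) r(1) assms(4) proj, of S t])
      (simp_all add: S_def)
  ultimately show ?thesis unfolding S_def by blast
qed

end
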